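(* Assume the demand is i.i.d. with pmf $P_X$. Let $\theta^*$ be a minimizer of $\theta\mapsto I(S-X;X)$ over $\mathcal P_S$ ($X\sim P_X$, $S\sim\theta$ independent), $J^*$ the minimum value, $\xi^*(w)=\sum_{(x,s):s-x=w}P_X(x)\theta^*(s)$, and $b^*(y\mid w)=P_X(y)\theta^*(y+w)/\xi^*(w)$ for $y\in\mathcal X\cap\mathcal Y_\circ(w)$ and $0$ otherwise. Then (1) $\xi^*$ and $\theta^*$ are related by $\xi^*(w)=\sum_{(x,s):s-x=w}P_X(x)\theta^*(s)$; (2) $b^*$ is a structured policy with respect to $(\theta^*,\xi^* )$; (3) if $S_1\sim\theta^*$ and the constant-distribution policy $Y_t\sim b^*(\cdot\mid S_t-X_t)$ is used, the (infinite-horizon) leakage rate equals $J^*$. Thus $J^*$ is achievable.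
   Context: $\mathcal X=\{0,\dots,m_x\}$, $\mathcal Y=\{0,\dots,m_y\}$, $\mathcal S=\{0,\dots,m_s\}$ with $m_x\le m_y$; $\mathcal W=\{s-x:s\in\mathcal S,x\in\mathcal X\}$; $\mathcal P_S$ the pmfs on $\mathcal S$; $\mathcal Y_\circ(w)=\{y\in\mathcal Y:w+y\in\mathcal S\}$. The demand $X_1,X_2,\dots$ is i.i.d. $\sim P_X$, independent of $S_1$. Given $b(y\mid w)$ with $b(\mathcal Y_\circ(w)\mid w)=1$, the constant-distribution policy $b$ draws $Y_t\sim b(\cdot\mid W_t)$, $W_t=S_t-X_t$, and $S_{t+1}=S_t+Y_t-X_t$. Given $\theta\in\mathcal P_S$ and $\xi(w)=\sum_{(x,s):s-x=w}P_X(x)\theta(s)$, a structured policy with respect to $(\theta,\xi)$ is $b(y\mid w)=P_X(y)\theta(y+w)/\xi(w)$ for $y\in\mathcal X\cap\mathcal Y_\circ(w)$ and $0$ otherwise. The leakage rate of a policy is $L_T=\frac1TI(X^T,S_1;Y^T)$, $L_\infty=\limsup_TL_T$. *)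

theory Defs
  imports "HOL-Analysis.Analysis"
begin

definition Xset :: "nat \<Rightarrow> int set" where "Xset mx = {0..int mx}"
definition Yset :: "nat \<Rightarrow> int set" where "Yset my = {0..int my}"
definition Sset :: "nat \<Rightarrow> int set" where "Sset ms = {0..int ms}"

definition Wset :: "nat \<Rightarrow> nat \<Rightarrow> int set" where
  "Wset mx ms = {s - x | s x. s \<in> Sset ms \<and> x \<in> Xset mx}"

definition Ycirc :: "nat \<Rightarrow> nat \<Rightarrow> int \<Rightarrow> int set" where
  "Ycirc my ms w = {y \<in> Yset my. w + y \<in> Sset ms}"

definition is_pmf_on :: "int set \<Rightarrow> (int \<Rightarrow> real) \<Rightarrow> bool" where
  "is_pmf_on A p \<longleftrightarrow> (\<forall>a. 0 \<le> p a) \<and> (\<forall>a. a \<notin> A \<longrightarrow> p a = 0) \<and> (\<Sum>a\<in>A. p a) = 1"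

definition mutual_info :: "('a \<Rightarrow> 'b \<Rightarrow> real) \<Rightarrow> 'a set \<Rightarrow> 'b set \<Rightarrow> real" where
  "mutual_info p A B =
     (\<Sum>a\<in>A. \<Sum>b\<in>B.
        if p a b > 0
        then p a b * ln (p a b / ((\<Sum>b'\<in>B. p a b') * (\<Sum>a'\<in>A. p a' b)))
        else 0)"

text \<open>\<open>I(S - X; X)\<close> for independent \<open>X \<sim> PX\<close>, \<open>S \<sim> \<theta>\<close>: joint pmf of (W,X) is PX x * \<theta>(w + x).\<close>
definition J_obj :: "nat \<Rightarrow> nat \<Rightarrow> (int \<Rightarrow> real) \<Rightarrow> (int \<Rightarrow> real) \<Rightarrow> real" where
  "J_obj mx ms PX \<theta> = mutual_info (\<lambda>w x. PX x * \<theta> (w + x)) (Wset mx ms) (Xset mx)"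

definition xi_of :: "nat \<Rightarrow> nat \<Rightarrow> (int \<Rightarrow> real) \<Rightarrow> (int \<Rightarrow> real) \<Rightarrow> int \<Rightarrow> real" where
  "xi_of mx ms PX \<theta> w = (\<Sum>(x,s)\<in>{(x,s). x \<in> Xset mx \<and> s \<in> Sset ms \<and> s - x = w}. PX x * \<theta> s)"

text \<open>Structured policy w.r.t. (\<theta>, \<xi>); \<open>b y w\<close> stands for b(y | w).\<close>
definition structured_policy ::
  "nat \<Rightarrow> nat \<Rightarrow> nat \<Rightarrow> (int \<Rightarrow> real) \<Rightarrow> (int \<Rightarrow> real) \<Rightarrow> (int \<Rightarrow> real)
     \<Rightarrow> (int \<Rightarrow> int \<Rightarrow> real) \<Rightarrow> bool" where
  "structured_policy mx my ms PX \<theta> \<xi> b \<longleftrightarrow>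
     (\<forall>w\<in>Wset mx ms. \<forall>y.
        b y w = (if y \<in> Xset mx \<inter> Ycirc my ms w then PX y * \<theta> (y + w) / \<xi> w else 0))"

text \<open>Probability that, starting from stock s, demands xs and decisions ys occur
  under the constant-distribution policy b: \<open>\<prod>_t PX(x_t) b(y_t | s_t - x_t)\<close>,
  with \<open>s_{t+1} = s_t + y_t - x_t\<close>.\<close>
fun traj_prob :: "(int \<Rightarrow> real) \<Rightarrow> (int \<Rightarrow> int \<Rightarrow> real) \<Rightarrow> int \<Rightarrow> int list \<Rightarrow> int list \<Rightarrow> real" where
  "traj_prob PX b s [] [] = 1"
| "traj_prob PX b s (x # xs) (y # ys) = PX x * b y (s - x) * traj_prob PX b (s + y - x) xs ys"
| "traj_prob PX b s _ _ = 0"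

text \<open>\<open>L_T = (1/T) I(X^T, S_1; Y^T)\<close> with \<open>S_1 \<sim> \<theta>1\<close>.\<close>
definition leakage_T ::
  "nat \<Rightarrow> nat \<Rightarrow> nat \<Rightarrow> (int \<Rightarrow> real) \<Rightarrow> (int \<Rightarrow> real) \<Rightarrow> (int \<Rightarrow> int \<Rightarrow> real) \<Rightarrow> nat \<Rightarrow> real" where
  "leakage_T mx my ms PX \<theta>1 b T =
     (1 / real T) * mutual_info
        (\<lambda>(xs, s1) ys. \<theta>1 s1 * traj_prob PX b s1 xs ys)
        {(xs, s1). length xs = T \<and> set xs \<subseteq> Xset mx \<and> s1 \<in> Sset ms}
        {ys. length ys = T \<and> set ys \<subseteq> Yset my}"

definition leakage_rate ::
  "nat \<Rightarrow> nat \<Rightarrow> nat \<Rightarrow> (int \<Rightarrow> real) \<Rightarrow> (int \<Rightarrow> real) \<Rightarrow> (int \<Rightarrow> int \<Rightarrow> real) \<Rightarrow> ereal" where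
  "leakage_rate mx my ms PX \<theta>1 b = limsup (\<lambda>T. ereal (leakage_T mx my ms PX \<theta>1 b T))"

end

theory Submission
  imports Defs
begin

text \<open>Start from \<open>S\<^sub>1 \<sim> \<theta>\<close> and let \<open>W = S - X\<close>. The structured policy makes the pair
  \<open>(W, Y)\<close> distributed like \<open>(S' - Y, Y)\<close> with \<open>S' \<sim> \<theta>\<close> and \<open>Y \<sim> P\<^sub>X\<close> independent, and the next
  state \<open>W + Y\<close> is again \<open>\<theta>\<close>-distributed. Hence the chain is stationary, the decisions \<open>Y\<^sup>T\<close> are
  i.i.d. \<open>P\<^sub>X\<close> just like the demands, and the information density of \<open>(X\<^sup>T, S\<^sub>1)\<close> and \<open>Y\<^sup>T\<close>
  is the sum over \<open>t\<close> of \<open>ln (\<theta>(S\<^bsub>t+1\<^esub>) / \<xi>(W\<^sub>t))\<close>. Each summand has mean \<open>I(S - X; X)\<close>, so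
  \<open>L\<^sub>T = J(\<theta>)\<close> for every \<open>T \<ge> 1\<close>.\<close>

definition lists_len :: "nat \<Rightarrow> 'a set \<Rightarrow> 'a list set" where
  "lists_len n A = {xs. length xs = n \<and> set xs \<subseteq> A}"

lemma lists_len_0 [simp]: "lists_len 0 A = {[]}"
  by (auto simp: lists_len_def)

lemma lists_len_Suc: "lists_len (Suc n) A = (\<lambda>(a, zs). a # zs) ` (A \<times> lists_len n A)"
  by (auto simp: lists_len_def length_Suc_conv image_iff)

lemma sum_lists_len_Suc:
  "(\<Sum>xs\<in>lists_len (Suc n) A. f xs) = (\<Sum>a\<in>A. \<Sum>zs\<in>lists_len n A. f (a # zs))"
proof -
  have "inj_on (\<lambda>(a, zs). a # zs) (A \<times> lists_len n A)"
    by (auto simp: inj_on_def)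
  then show ?thesis
    unfolding lists_len_Suc by (simp add: sum.reindex sum.cartesian_product split_def)
qed

lemma sum_prod_list_lists_len:
  fixes p :: "'a \<Rightarrow> real"
  assumes "(\<Sum>a\<in>A. p a) = 1"
  shows "(\<Sum>xs\<in>lists_len n A. prod_list (map p xs)) = 1"
proof (induction n)
  case (Suc n)
  have "(\<Sum>xs\<in>lists_len (Suc n) A. prod_list (map p xs))
      = (\<Sum>a\<in>A. p a * (\<Sum>zs\<in>lists_len n A. prod_list (map p zs)))"
    by (simp add: sum_lists_len_Suc sum_distrib_left)
  with Suc.IH assms show ?case by simp
qed simp

fun traj_cost :: "(int \<Rightarrow> int \<Rightarrow> real) \<Rightarrow> int \<Rightarrow> int list \<Rightarrow> int list \<Rightarrow> real" where
  "traj_cost f s (x # xs) (y # ys) = f y (s - x) + traj_cost f (s + y - x) xs ys"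
| "traj_cost f s _ _ = 0"

lemma sum_traj_prob_Suc:
  "(\<Sum>xs\<in>lists_len (Suc n) X. \<Sum>ys\<in>lists_len (Suc n) Y. traj_prob PX b s xs ys * F xs ys)
   = (\<Sum>x\<in>X. \<Sum>y\<in>Y. PX x * b y (s - x) *
        (\<Sum>xs\<in>lists_len n X. \<Sum>ys\<in>lists_len n Y. traj_prob PX b (s + y - x) xs ys * F (x # xs) (y # ys)))"
  by (simp add: sum_lists_len_Suc sum_distrib_left mult.assoc sum.swap[of _ "lists_len n X" Y])

lemma traj_prob_nonneg:
  assumes "\<And>x. 0 \<le> PX x" and "\<And>y w. 0 \<le> b y w"
  shows "0 \<le> traj_prob PX b s xs ys"
  using assms by (induction PX b s xs ys rule: traj_prob.induct) simp_all

lemma traj_prob_factor: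
  "traj_prob PX (\<lambda>y w. PX y * r y w) s xs ys
   = prod_list (map PX xs) * prod_list (map PX ys) * traj_prob (\<lambda>_. 1) r s xs ys"
  by (induction PX "\<lambda>y w. PX y * r y w" s xs ys rule: traj_prob.induct) (simp_all add: mult_ac)

lemma ln_traj_prob:
  assumes "\<And>y w. 0 \<le> r y w" and "traj_prob (\<lambda>_. 1) r s xs ys > 0"
  shows "ln (traj_prob (\<lambda>_. 1) r s xs ys) = traj_cost (\<lambda>y w. ln (r y w)) s xs ys"
  using assms(2)
proof (induction xs arbitrary: s ys)
  case (Cons x xs)
  then obtain y ys' where ys: "ys = y # ys'"
    by (cases ys) auto
  have "0 \<le> traj_prob (\<lambda>_. 1) r (s + y - x) xs ys'"
    using assms(1) by (intro traj_prob_nonneg) auto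
  with Cons.prems assms(1)[of y "s - x"]
  have "r y (s - x) > 0" "traj_prob (\<lambda>_. 1) r (s + y - x) xs ys' > 0"
    by (auto simp: ys zero_less_mult_iff)
  with Cons.IH show ?case by (simp add: ys ln_mult)
next
  case Nil then show ?case by (cases ys) simp_all
qed

lemma mutual_info_eq_sum_ln_density:
  assumes "\<And>a b. 0 \<le> p a b"
    and rows: "\<And>a. a \<in> A \<Longrightarrow> (\<Sum>b\<in>B. p a b) = pA a"
    and cols: "\<And>b. b \<in> B \<Longrightarrow> (\<Sum>a\<in>A. p a b) = pB b"
    and density: "\<And>a b. a \<in> A \<Longrightarrow> b \<in> B \<Longrightarrow> p a b > 0 \<Longrightarrow> p a b = pA a * pB b * R a b"
  shows "mutual_info p A B = (\<Sum>a\<in>A. \<Sum>b\<in>B. p a b * ln (R a b))"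
  unfolding mutual_info_def
proof (intro sum.cong refl)
  fix a b assume "a \<in> A" "b \<in> B"
  show "(if p a b > 0 then p a b * ln (p a b / ((\<Sum>b'\<in>B. p a b') * (\<Sum>a'\<in>A. p a' b))) else 0)
        = p a b * ln (R a b)"
  proof (cases "p a b > 0")
    case True
    with density[OF \<open>a \<in> A\<close> \<open>b \<in> B\<close>] have "pA a * pB b \<noteq> 0" and "p a b = pA a * pB b * R a b"
      by auto
    with True show ?thesis
      using rows[OF \<open>a \<in> A\<close>] cols[OF \<open>b \<in> B\<close>] by simp
  next
    case False
    with assms(1)[of a b] show ?thesis by simp
  qed
qed

locale inventory_model =
  fixes mx my ms :: nat and PX \<theta> :: "int \<Rightarrow> real"
  assumes demand_le_order: "mx \<le> my"
    and pmf_PX: "is_pmf_on (Xset mx) PX"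
    and pmf_\<theta>: "is_pmf_on (Sset ms) \<theta>"
begin

abbreviation "X \<equiv> Xset mx"
abbreviation "Y \<equiv> Yset my"
abbreviation "S \<equiv> Sset ms"
abbreviation "W \<equiv> Wset mx ms"
abbreviation "\<xi> \<equiv> xi_of mx ms PX \<theta>"

text \<open>\<open>ratio y w = b(y | w) / P\<^sub>X(y)\<close>; the information density is the product of these
  factors along a trajectory.\<close>

definition ratio :: "int \<Rightarrow> int \<Rightarrow> real" where
  "ratio y w = (if y \<in> X \<inter> Ycirc my ms w then \<theta> (y + w) / \<xi> w else 0)"

definition policy :: "int \<Rightarrow> int \<Rightarrow> real" where
  "policy y w = PX y * ratio y w"

lemma finite_sets [simp]: "finite X" "finite Y" "finite S" "finite W"
proof -
  have "W \<subseteq> (\<lambda>(s, x). s - x) ` (S \<times> X)"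
    by (auto simp: Wset_def)
  then show "finite W"
    by (rule finite_subset) (simp add: Sset_def Xset_def)
qed (simp_all add: Xset_def Yset_def Sset_def)

lemma Xset_subset_Yset: "X \<subseteq> Y"
  using demand_le_order by (auto simp: Xset_def Yset_def)

lemma PX_nonneg: "0 \<le> PX x" and PX_outside: "x \<notin> X \<Longrightarrow> PX x = 0" and sum_PX: "(\<Sum>x\<in>X. PX x) = 1"
  using pmf_PX by (auto simp: is_pmf_on_def)

lemma \<theta>_nonneg: "0 \<le> \<theta> s" and \<theta>_outside: "s \<notin> S \<Longrightarrow> \<theta> s = 0" and sum_\<theta>: "(\<Sum>s\<in>S. \<theta> s) = 1"
  using pmf_\<theta> by (auto simp: is_pmf_on_def)

lemma xi_eq: "\<xi> w = (\<Sum>x\<in>X. PX x * \<theta> (w + x))"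
proof -
  have pairs: "{(x, s). x \<in> X \<and> s \<in> S \<and> s - x = w} = (\<lambda>x. (x, w + x)) ` {x \<in> X. w + x \<in> S}"
    by auto
  have "\<xi> w = (\<Sum>x\<in>{x \<in> X. w + x \<in> S}. PX x * \<theta> (w + x))"
    unfolding xi_of_def pairs by (subst sum.reindex) (auto simp: inj_on_def)
  also have "\<dots> = (\<Sum>x\<in>X. PX x * \<theta> (w + x))"
    by (rule sum.mono_neutral_left) (auto simp: \<theta>_outside)
  finally show ?thesis .
qed

lemma le_xi: "x \<in> X \<Longrightarrow> PX x * \<theta> (w + x) \<le> \<xi> w"
  unfolding xi_eq by (rule member_le_sum) (auto intro: mult_nonneg_nonneg PX_nonneg \<theta>_nonneg)

lemma xi_nonneg: "0 \<le> \<xi> w"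
  unfolding xi_eq by (intro sum_nonneg mult_nonneg_nonneg PX_nonneg \<theta>_nonneg)

lemma ratio_nonneg: "0 \<le> ratio y w"
  using \<theta>_nonneg xi_nonneg by (simp add: ratio_def)

lemma policy_nonneg: "0 \<le> policy y w"
  by (simp add: policy_def PX_nonneg ratio_nonneg)

lemma sum_Wset_shift:
  assumes "x \<in> X"
  shows "(\<Sum>w\<in>W. \<theta> (w + x) * g w) = (\<Sum>s\<in>S. \<theta> s * g (s - x))"
proof -
  have "(\<Sum>w\<in>W. \<theta> (w + x) * g w) = (\<Sum>w\<in>(\<lambda>s. s - x) ` S. \<theta> (w + x) * g w)"
  proof (rule sum.mono_neutral_right)
    show "(\<lambda>s. s - x) ` S \<subseteq> W"
      using assms by (auto simp: Wset_def)
    show "\<forall>w\<in>W - (\<lambda>s. s - x) ` S. \<theta> (w + x) * g w = 0"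
      by (metis DiffD2 \<theta>_outside add_diff_cancel_right' image_eqI mult_eq_0_iff)
  qed simp
  also have "\<dots> = (\<Sum>s\<in>S. \<theta> s * g (s - x))"
    by (subst sum.reindex) (auto simp: inj_on_def)
  finally show ?thesis .
qed

lemma policy_mult_xi: "policy y w * \<xi> w = (if y \<in> X then PX y * \<theta> (w + y) else 0)"
proof (cases "y \<in> X \<and> w + y \<in> S")
  case True
  then have "y \<in> X \<inter> Ycirc my ms w"
    using Xset_subset_Yset by (auto simp: Ycirc_def)
  moreover have "\<xi> w = 0 \<Longrightarrow> PX y * \<theta> (w + y) = 0"
    using le_xi[of y w] True PX_nonneg[of y] \<theta>_nonneg[of "w + y"] by (metis antisym mult_nonneg_nonneg)
  ultimately show ?thesis
    using True by (auto simp: policy_def ratio_def add.commute)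
next
  case False
  then show ?thesis
    by (auto simp: policy_def ratio_def Ycirc_def \<theta>_outside add.commute)
qed

lemma sum_policy:
  assumes "x \<in> X" and "\<theta> s * PX x \<noteq> 0"
  shows "(\<Sum>y\<in>Y. policy y (s - x)) = 1"
proof -
  have "0 < PX x * \<theta> s"
    using assms(2) PX_nonneg[of x] \<theta>_nonneg[of s] by (simp add: less_le mult.commute)
  then have pos: "\<xi> (s - x) > 0"
    using le_xi[OF assms(1), of "s - x"] by simp
  have "(\<Sum>y\<in>Y. policy y (s - x)) * \<xi> (s - x) = (\<Sum>y\<in>Y. if y \<in> X then PX y * \<theta> (s - x + y) else 0)"
    by (simp add: sum_distrib_right policy_mult_xi)
  also have "\<dots> = \<xi> (s - x)"
    using Xset_subset_Yset by (simp add: sum.If_cases Int_absorb1 xi_eq)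
  finally show ?thesis
    using pos by simp
qed

text \<open>Reversibility: the law \<open>\<xi>(w) b(y | w)\<close> of \<open>(W, Y)\<close> equals \<open>P\<^sub>X(y) \<theta>(w + y)\<close>.\<close>

lemma sum_policy_reversal:
  "(\<Sum>s\<in>S. \<theta> s * (\<Sum>x\<in>X. PX x * policy y (s - x) * k (s - x)))
   = (if y \<in> X then PX y * (\<Sum>s\<in>S. \<theta> s * k (s - y)) else 0)"
proof -
  have "(\<Sum>s\<in>S. \<theta> s * (\<Sum>x\<in>X. PX x * policy y (s - x) * k (s - x)))
      = (\<Sum>x\<in>X. PX x * (\<Sum>s\<in>S. \<theta> s * (policy y (s - x) * k (s - x))))"
    by (simp add: sum_distrib_left sum.swap[of _ S X] mult_ac)
  also have "\<dots> = (\<Sum>x\<in>X. PX x * (\<Sum>w\<in>W. \<theta> (w + x) * (policy y w * k w)))"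
    by (simp add: sum_Wset_shift)
  also have "\<dots> = (\<Sum>w\<in>W. policy y w * \<xi> w * k w)"
    by (simp add: xi_eq sum_distrib_left sum_distrib_right sum.swap[of _ X W] mult_ac)
  also have "\<dots> = (if y \<in> X then PX y * (\<Sum>w\<in>W. \<theta> (w + y) * k w) else 0)"
    unfolding policy_mult_xi by (cases "y \<in> X") (simp_all add: sum_distrib_left mult_ac)
  also have "\<dots> = (if y \<in> X then PX y * (\<Sum>s\<in>S. \<theta> s * k (s - y)) else 0)"
    by (simp add: sum_Wset_shift)
  finally show ?thesis .
qed

lemma policy_mult_cong:
  assumes "\<theta> (y + w) * a = \<theta> (y + w) * b"
  shows "policy y w * a = policy y w * b"
  using assms by (auto simp: policy_def ratio_def)

lemma sum_traj_prob_decisions: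
  "length xs = n \<Longrightarrow>
   \<theta> s * (\<Sum>ys\<in>lists_len n Y. traj_prob PX policy s xs ys) = \<theta> s * prod_list (map PX xs)"
proof (induction xs arbitrary: s n)
  case (Cons x xs)
  then obtain m where n: "n = Suc m" and m: "length xs = m"
    by auto
  have IH: "policy y (s - x) * (\<Sum>ys\<in>lists_len m Y. traj_prob PX policy (s + y - x) xs ys)
      = policy y (s - x) * prod_list (map PX xs)" for y
    by (rule policy_mult_cong) (use Cons.IH[OF m, of "s + y - x"] in \<open>simp add: algebra_simps\<close>)
  have "\<theta> s * (\<Sum>ys\<in>lists_len n Y. traj_prob PX policy s (x # xs) ys)
      = \<theta> s * PX x * (\<Sum>y\<in>Y. policy y (s - x) *
          (\<Sum>ys\<in>lists_len m Y. traj_prob PX policy (s + y - x) xs ys))"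
    by (simp add: n sum_lists_len_Suc sum_distrib_left mult_ac)
  also have "\<dots> = \<theta> s * PX x * (\<Sum>y\<in>Y. policy y (s - x)) * prod_list (map PX xs)"
    by (simp only: IH sum_distrib_right mult.assoc)
  also have "\<dots> = \<theta> s * PX x * prod_list (map PX xs)"
    using sum_policy[of x s] PX_outside[of x] by (cases "x \<in> X") auto
  finally show ?case by simp
qed simp

lemma sum_traj_prob:
  "\<theta> s * (\<Sum>xs\<in>lists_len n X. \<Sum>ys\<in>lists_len n Y. traj_prob PX policy s xs ys) = \<theta> s"
proof -
  have "\<theta> s * (\<Sum>xs\<in>lists_len n X. \<Sum>ys\<in>lists_len n Y. traj_prob PX policy s xs ys)
      = (\<Sum>xs\<in>lists_len n X. \<theta> s * (\<Sum>ys\<in>lists_len n Y. traj_prob PX policy s xs ys))"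
    by (simp add: sum_distrib_left)
  also have "\<dots> = (\<Sum>xs\<in>lists_len n X. \<theta> s * prod_list (map PX xs))"
    by (intro sum.cong refl sum_traj_prob_decisions) (simp add: lists_len_def)
  also have "\<dots> = \<theta> s"
    by (simp add: sum_distrib_left[symmetric] sum_prod_list_lists_len sum_PX)
  finally show ?thesis .
qed

lemma sum_traj_prob_demands:
  "length ys = n \<Longrightarrow>
   (\<Sum>s\<in>S. \<theta> s * (\<Sum>xs\<in>lists_len n X. traj_prob PX policy s xs ys)) = prod_list (map PX ys)"
proof (induction ys arbitrary: n)
  case (Cons y ys)
  then obtain m where n: "n = Suc m" and m: "length ys = m"
    by auto
  define h where "h w = (\<Sum>xs\<in>lists_len m X. traj_prob PX policy (w + y) xs ys)" for w
  have "(\<Sum>s\<in>S. \<theta> s * (\<Sum>xs\<in>lists_len n X. traj_prob PX policy s xs (y # ys)))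
      = (\<Sum>s\<in>S. \<theta> s * (\<Sum>x\<in>X. PX x * policy y (s - x) * h (s - x)))"
    by (simp add: n h_def sum_lists_len_Suc sum_distrib_left mult.assoc add.commute add_diff_eq)
  also have "\<dots> = (if y \<in> X then PX y * (\<Sum>s\<in>S. \<theta> s * h (s - y)) else 0)"
    by (rule sum_policy_reversal)
  also have "\<dots> = PX y * prod_list (map PX ys)"
    using Cons.IH[OF m] PX_outside by (simp add: h_def)
  finally show ?case by simp
qed (simp add: sum_\<theta>)

lemma sum_traj_cost:
  "(\<Sum>s\<in>S. \<theta> s * (\<Sum>xs\<in>lists_len n X. \<Sum>ys\<in>lists_len n Y.
        traj_prob PX policy s xs ys * traj_cost f s xs ys))
   = real n * (\<Sum>y\<in>X. PX y * (\<Sum>s\<in>S. \<theta> s * f y (s - y)))"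
proof (induction n)
  case (Suc n)
  define c where "c = (\<Sum>y\<in>X. PX y * (\<Sum>s\<in>S. \<theta> s * f y (s - y)))"
  define P where "P s = (\<Sum>xs\<in>lists_len n X. \<Sum>ys\<in>lists_len n Y. traj_prob PX policy s xs ys)" for s
  define E where "E s = (\<Sum>xs\<in>lists_len n X. \<Sum>ys\<in>lists_len n Y.
                           traj_prob PX policy s xs ys * traj_cost f s xs ys)" for s
  define G where "G y w = f y w * P (w + y) + E (w + y)" for y w
  have step: "(\<Sum>xs\<in>lists_len (Suc n) X. \<Sum>ys\<in>lists_len (Suc n) Y.
                 traj_prob PX policy s xs ys * traj_cost f s xs ys)
      = (\<Sum>x\<in>X. \<Sum>y\<in>Y. PX x * policy y (s - x) * G y (s - x))" for s
    unfolding sum_traj_prob_Suc G_def P_def E_def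
    by (simp add: algebra_simps sum.distrib sum_distrib_left)
  have "(\<Sum>s\<in>S. \<theta> s * (\<Sum>x\<in>X. \<Sum>y\<in>Y. PX x * policy y (s - x) * G y (s - x)))
      = (\<Sum>y\<in>Y. \<Sum>s\<in>S. \<theta> s * (\<Sum>x\<in>X. PX x * policy y (s - x) * G y (s - x)))"
    by (simp add: sum_distrib_left sum.swap[of _ X Y] sum.swap[of _ S Y])
  also have "\<dots> = (\<Sum>y\<in>X. PX y * (\<Sum>s\<in>S. \<theta> s * G y (s - y)))"
    using Xset_subset_Yset by (simp add: sum_policy_reversal sum.If_cases Int_absorb1)
  also have "\<dots> = (\<Sum>y\<in>X. PX y * ((\<Sum>s\<in>S. \<theta> s * f y (s - y)) + real n * c))"
  proof (intro sum.cong refl arg_cong[where f = "(*) (PX _)"])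
    fix y
    have "(\<Sum>s\<in>S. \<theta> s * G y (s - y)) = (\<Sum>s\<in>S. f y (s - y) * (\<theta> s * P s) + \<theta> s * E s)"
      by (simp add: G_def algebra_simps)
    then show "(\<Sum>s\<in>S. \<theta> s * G y (s - y)) = (\<Sum>s\<in>S. \<theta> s * f y (s - y)) + real n * c"
      using Suc.IH by (simp add: P_def E_def c_def sum_traj_prob sum.distrib mult.commute)
  qed
  also have "\<dots> = c + real n * c"
    by (simp add: distrib_left sum.distrib sum_distrib_right[symmetric] sum_PX c_def)
  finally show ?case
    by (simp only: step) (simp add: c_def algebra_simps)
qed simp

lemma traj_prob_policy:
  "traj_prob PX policy s xs ys
   = prod_list (map PX xs) * prod_list (map PX ys) * traj_prob (\<lambda>_. 1) ratio s xs ys"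
  using traj_prob_factor[of PX ratio] by (simp add: policy_def[abs_def])

lemma traj_prob_mult_ln_ratio:
  "traj_prob PX policy s xs ys * ln (traj_prob (\<lambda>_. 1) ratio s xs ys)
   = traj_prob PX policy s xs ys * traj_cost (\<lambda>y w. ln (ratio y w)) s xs ys"
proof (cases "traj_prob (\<lambda>_. 1) ratio s xs ys > 0")
  case True
  then show ?thesis
    by (simp add: ln_traj_prob ratio_nonneg)
next
  case False
  with traj_prob_nonneg[of "\<lambda>_. 1" ratio] have "traj_prob (\<lambda>_. 1) ratio s xs ys = 0"
    by (simp add: ratio_nonneg less_le)
  then show ?thesis
    by (simp add: traj_prob_policy)
qed

lemma mutual_info_trajectories:
  "mutual_info (\<lambda>(xs, s1) ys. \<theta> s1 * traj_prob PX policy s1 xs ys)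
     {(xs, s1). length xs = n \<and> set xs \<subseteq> X \<and> s1 \<in> S} {ys. length ys = n \<and> set ys \<subseteq> Y}
   = real n * (\<Sum>y\<in>X. PX y * (\<Sum>s\<in>S. \<theta> s * ln (ratio y (s - y))))"
proof -
  define p where "p = (\<lambda>(xs, s1) ys. \<theta> s1 * traj_prob PX policy s1 xs ys)"
  define R where "R = (\<lambda>(xs, s1) ys. traj_prob (\<lambda>_. 1) ratio s1 xs ys)"
  have A: "{(xs, s1). length xs = n \<and> set xs \<subseteq> X \<and> s1 \<in> S} = lists_len n X \<times> S"
    by (auto simp: lists_len_def)
  have B: "{ys. length ys = n \<and> set ys \<subseteq> Y} = lists_len n Y"
    by (simp add: lists_len_def)
  have factor: "p a ys = (\<theta> (snd a) * prod_list (map PX (fst a))) * prod_list (map PX ys) * R a ys" for a ys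
    by (simp add: p_def R_def split_def traj_prob_policy mult_ac)
  have p_nonneg: "0 \<le> p a ys" for a ys
    using \<theta>_nonneg traj_prob_nonneg[OF PX_nonneg policy_nonneg] by (simp add: p_def split_def)
  have "mutual_info p (lists_len n X \<times> S) (lists_len n Y)
      = (\<Sum>a\<in>lists_len n X \<times> S. \<Sum>ys\<in>lists_len n Y. p a ys * ln (R a ys))"
  proof (rule mutual_info_eq_sum_ln_density[OF p_nonneg _ _ factor])
    show "(\<Sum>ys\<in>lists_len n Y. p a ys) = \<theta> (snd a) * prod_list (map PX (fst a))"
      if "a \<in> lists_len n X \<times> S" for a
      using that sum_traj_prob_decisions[of "fst a" n "snd a"]
      by (auto simp: p_def lists_len_def sum_distrib_left split: prod.splits)
    show "(\<Sum>a\<in>lists_len n X \<times> S. p a ys) = prod_list (map PX ys)" if "ys \<in> lists_len n Y" for ys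
    proof -
      have "(\<Sum>a\<in>lists_len n X \<times> S. p a ys)
          = (\<Sum>s\<in>S. \<theta> s * (\<Sum>xs\<in>lists_len n X. traj_prob PX policy s xs ys))"
        by (simp add: p_def sum.cartesian_product' sum.swap[of _ _ S] sum_distrib_left)
      also have "\<dots> = prod_list (map PX ys)"
        using that by (intro sum_traj_prob_demands) (simp add: lists_len_def)
      finally show ?thesis .
    qed
  qed
  also have "\<dots> = (\<Sum>a\<in>lists_len n X \<times> S. \<Sum>ys\<in>lists_len n Y.
                     p a ys * traj_cost (\<lambda>y w. ln (ratio y w)) (snd a) (fst a) ys)"
    by (simp add: p_def R_def split_def mult.assoc traj_prob_mult_ln_ratio)
  also have "\<dots> = (\<Sum>s\<in>S. \<theta> s * (\<Sum>xs\<in>lists_len n X. \<Sum>ys\<in>lists_len n Y.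
                     traj_prob PX policy s xs ys * traj_cost (\<lambda>y w. ln (ratio y w)) s xs ys))"
    by (simp add: p_def sum.cartesian_product' sum.swap[of _ "lists_len n X" S] sum_distrib_left mult.assoc)
  finally show ?thesis
    unfolding A B p_def sum_traj_cost .
qed

lemma J_obj_eq: "J_obj mx ms PX \<theta> = (\<Sum>y\<in>X. PX y * (\<Sum>s\<in>S. \<theta> s * ln (ratio y (s - y))))"
proof -
  define q where "q = (\<lambda>w x. PX x * \<theta> (w + x))"
  have "J_obj mx ms PX \<theta> = (\<Sum>w\<in>W. \<Sum>x\<in>X. q w x * ln (ratio x w))"
    unfolding J_obj_def q_def[symmetric]
  proof (rule mutual_info_eq_sum_ln_density)
    show "0 \<le> q w x" for w x
      by (simp add: q_def PX_nonneg \<theta>_nonneg)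
    show "(\<Sum>x\<in>X. q w x) = \<xi> w" for w
      by (simp add: q_def xi_eq)
    show "(\<Sum>w\<in>W. q w x) = PX x" if "x \<in> X" for x
      using sum_Wset_shift[OF that, of "\<lambda>_. 1"] sum_\<theta>
      by (simp add: q_def sum_distrib_left[symmetric] mult.commute)
    show "q w x = \<xi> w * PX x * ratio x w" if "x \<in> X" and pos: "q w x > 0" for w x
    proof -
      have "PX x > 0" "\<theta> (w + x) > 0"
        using pos PX_nonneg[of x] \<theta>_nonneg[of "w + x"] by (auto simp: q_def zero_less_mult_iff)
      moreover from this have "x \<in> Ycirc my ms w"
        using that(1) Xset_subset_Yset \<theta>_outside by (force simp: Ycirc_def add.commute)
      moreover have "\<xi> w > 0"
        using le_xi[OF that(1), of w] pos by (simp add: q_def)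
      ultimately show ?thesis
        using that(1) by (simp add: q_def ratio_def add.commute)
    qed
  qed
  also have "\<dots> = (\<Sum>x\<in>X. PX x * (\<Sum>w\<in>W. \<theta> (w + x) * ln (ratio x w)))"
    by (simp add: q_def sum.swap[of _ W] sum_distrib_left mult.assoc)
  also have "\<dots> = (\<Sum>y\<in>X. PX y * (\<Sum>s\<in>S. \<theta> s * ln (ratio y (s - y))))"
    by (simp add: sum_Wset_shift)
  finally show ?thesis .
qed

end

theorem proposition3:
  fixes mx my ms :: nat
    and PX \<theta>s \<xi>s :: "int \<Rightarrow> real"
    and bs :: "int \<Rightarrow> int \<Rightarrow> real"
    and Js :: real
  assumes "mx \<le> my"
    and "is_pmf_on (Xset mx) PX"
    and "is_pmf_on (Sset ms) \<theta>s"
    and "\<forall>\<theta>. is_pmf_on (Sset ms) \<theta> \<longrightarrow> J_obj mx ms PX \<theta>s \<le> J_obj mx ms PX \<theta>"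
    and "Js = J_obj mx ms PX \<theta>s"
    and "\<xi>s = (\<lambda>w. \<Sum>(x,s)\<in>{(x,s). x \<in> Xset mx \<and> s \<in> Sset ms \<and> s - x = w}. PX x * \<theta>s s)"
    and "bs = (\<lambda>y w. if y \<in> Xset mx \<inter> Ycirc my ms w then PX y * \<theta>s (y + w) / \<xi>s w else 0)"
  shows "(\<forall>w. \<xi>s w = xi_of mx ms PX \<theta>s w)
       \<and> structured_policy mx my ms PX \<theta>s \<xi>s bs
       \<and> leakage_rate mx my ms PX \<theta>s bs = ereal Js"
proof -
  interpret inventory_model mx my ms PX \<theta>s
    using assms(1-3) by unfold_locales
  have xi: "\<xi>s = xi_of mx ms PX \<theta>s"
    using assms(6) by (simp add: xi_of_def fun_eq_iff)
  have policy: "bs = policy"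
    using assms(7) by (simp add: fun_eq_iff policy_def ratio_def xi)
  have "leakage_T mx my ms PX \<theta>s bs T = Js" if "T \<ge> 1" for T
    using that unfolding leakage_T_def policy mutual_info_trajectories assms(5) J_obj_eq by simp
  then have "(\<lambda>T. ereal (leakage_T mx my ms PX \<theta>s bs T)) \<longlonglongrightarrow> ereal Js"
    by (intro tendsto_eventually eventually_sequentiallyI[of 1]) simp
  then have "leakage_rate mx my ms PX \<theta>s bs = ereal Js"
    unfolding leakage_rate_def by (intro lim_imp_Limsup) simp_all
  with xi show ?thesis
    by (simp add: structured_policy_def assms(7))
qed

end
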